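(* Consider a downlink system with $L$ transmitters, each having $M$ antennas, $K$ single-antenna data receivers and $J$ single-antenna energy receivers. For $k\in\{1,\dots,K\}$ let $\mathbf{h}_k\in\mathbb{C}^{ML\times1}$ and $\mathbf{H}_k=\mathbf{h}_k\mathbf{h}_k^H$; for $j\in\{1,\dots,J\}$ let $\mathbf{g}_j\in\mathbb{C}^{ML\times1}$ and $\mathbf{G}_j=\mathbf{g}_j\mathbf{g}_j^H$. For $l\in\{1,\dots,L\}$ let $\mathbf{A}_l$ be the $ML\times ML$ diagonal matrix with $(l-1)M$ leading zeros, then $M$ ones, then $(L-l)M$ zeros on its diagonal. Fix $\sigma^2>0$, $\eta\in(0,1)$, $Q_{\min}\ge0$, $C_l>0$, $E_l>0$, $\beta_{kl}>0$, $\hat R_k\ge 0$. Let $\mathcal{F}_0$ be the set of tuples of Hermitian matrices $(\{\mathbf{W}_k\}_{k=1}^K,\{\mathbf{V}_j\}_{j=1}^J)$ satisfying (a) $\sum_{i=1}^K\mathrm{tr}(\mathbf{G}_j\mathbf{W}_i)+\sum_{i=1}^J\mathrm{tr}(\mathbf{G}_j\mathbf{V}_i)\ge Q_{\min}/\eta$ for all $j$; (b) $\sum_{k=1}^K\beta_{kl}\,\mathrm{tr}(\mathbf{W}_k\mathbf{A}_l)\,\hat R_k\le C_l$ for all $l$; (c) $\mathbf{W}_k\succeq0$, $\mathbf{V}_j\succeq0$ for all $k,j$. Let (P4) be the problem of maximizing $$\min_{k}\frac{\mathrm{tr}(\mathbf{H}_k\mathbf{W}_k)}{\sum_{i\neq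 k}\mathrm{tr}(\mathbf{H}_k\mathbf{W}_i)+\sum_{i=1}^J\mathrm{tr}(\mathbf{H}_k\mathbf{V}_i)+\sigma^2}$$ over $\mathcal{F}_0$ subject additionally to $\sum_{k=1}^K\mathrm{tr}(\mathbf{W}_k\mathbf{A}_l)+\sum_{j=1}^J\mathrm{tr}(\mathbf{V}_j\mathbf{A}_l)\le E_l$ for all $l$, and let $\gamma_{\max}$ denote its optimal value. For $\gamma>0$, let (P5) be the problem of minimizing $$\max_{l}\frac{\sum_{k=1}^K\mathrm{tr}(\mathbf{W}_k\mathbf{A}_l)+\sum_{j=1}^J\mathrm{tr}(\mathbf{V}_j\mathbf{A}_l)}{E_l}$$ over $\mathcal{F}_0$ subject additionally to $\frac1\gamma\mathrm{tr}(\mathbf{H}_k\mathbf{W}_k)-\sum_{i\ne k}\mathrm{tr}(\mathbf{H}_k\mathbf{W}_i)-\sum_{i=1}^J\mathrm{tr}(\mathbf{H}_k\mathbf{V}_i)-\sigma^2\ge0$ for all $k$, and let $h(\gamma)$ denote its optimal value. Call $\gamma$ achievable if $\gamma\le\gamma_{\max}$. Then a common SINR target $\gamma>0$ is achievable if and only if $h(\gamma)\le 1$.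
   Context: $\mathrm{tr}$ denotes trace and $\succeq0$ positive semidefiniteness. The ratio in (P4) is the signal-to-interference-plus-noise ratio (SINR) of data receiver $k$ under the relaxed beamforming covariances $\mathbf{W}_k$ (data) and $\mathbf{V}_j$ (energy); $h(\gamma)$ is the minimum weighted peak transmit power needed to give every data receiver SINR at least $\gamma$. *)

theory Defs
  imports "Jordan_Normal_Form.Matrix" "HOL-Library.Extended_Real"
begin

definition mtrace :: "complex mat \<Rightarrow> complex" where
  "mtrace X = (\<Sum>i<dim_row X. X $$ (i,i))"

definition hermitian_mat :: "nat \<Rightarrow> complex mat \<Rightarrow> bool" where
  "hermitian_mat N W \<longleftrightarrow> W \<in> carrier_mat N N \<and>
     (\<forall>i<N. \<forall>j<N. W $$ (i,j) = cnj (W $$ (j,i)))"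

definition psd_mat :: "nat \<Rightarrow> complex mat \<Rightarrow> bool" where
  "psd_mat N W \<longleftrightarrow> hermitian_mat N W \<and>
     (\<forall>x\<in>carrier_vec N. 0 \<le> Re (\<Sum>i<N. \<Sum>j<N. cnj (x $ i) * W $$ (i,j) * x $ j))"

definition outer :: "complex vec \<Rightarrow> complex mat" where
  "outer h = mat (dim_vec h) (dim_vec h) (\<lambda>(i,j). h $ i * cnj (h $ j))"

definition selA :: "nat \<Rightarrow> nat \<Rightarrow> nat \<Rightarrow> complex mat" where
  "selA M L l = mat_diag (M * L) (\<lambda>i. if (l - 1) * M \<le> i \<and> i < l * M then 1 else 0)"

text \<open>tr(X Y) as a real number (all traces occurring are of products of Hermitian
  matrices with PSD matrices, hence real; we take the real part).\<close>
definition rtr :: "complex mat \<Rightarrow> complex mat \<Rightarrow> real" where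
  "rtr X Y = Re (mtrace (X * Y))"

definition F0 :: "nat \<Rightarrow> nat \<Rightarrow> nat \<Rightarrow> nat \<Rightarrow> (nat \<Rightarrow> complex vec) \<Rightarrow> real \<Rightarrow> real
   \<Rightarrow> (nat \<Rightarrow> real) \<Rightarrow> (nat \<Rightarrow> nat \<Rightarrow> real) \<Rightarrow> (nat \<Rightarrow> real)
   \<Rightarrow> (nat \<Rightarrow> complex mat) \<Rightarrow> (nat \<Rightarrow> complex mat) \<Rightarrow> bool" where
  "F0 M L K J g eta Qmin C beta Rhat W V \<longleftrightarrow>
     (\<forall>j\<in>{1..J}. (\<Sum>i=1..K. rtr (outer (g j)) (W i)) + (\<Sum>i=1..J. rtr (outer (g j)) (V i))
                    \<ge> Qmin / eta) \<and>
     (\<forall>l\<in>{1..L}. (\<Sum>k=1..K. beta k l * rtr (W k) (selA M L l) * Rhat k) \<le> C l) \<and>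
     (\<forall>k\<in>{1..K}. psd_mat (M * L) (W k)) \<and>
     (\<forall>j\<in>{1..J}. psd_mat (M * L) (V j))"

definition sinr :: "nat \<Rightarrow> nat \<Rightarrow> (nat \<Rightarrow> complex vec) \<Rightarrow> real
   \<Rightarrow> (nat \<Rightarrow> complex mat) \<Rightarrow> (nat \<Rightarrow> complex mat) \<Rightarrow> nat \<Rightarrow> real" where
  "sinr K J h sigma2 W V k =
     rtr (outer (h k)) (W k) /
     ((\<Sum>i\<in>{1..K}-{k}. rtr (outer (h k)) (W i)) + (\<Sum>i=1..J. rtr (outer (h k)) (V i)) + sigma2)"

definition power :: "nat \<Rightarrow> nat \<Rightarrow> nat \<Rightarrow> nat
   \<Rightarrow> (nat \<Rightarrow> complex mat) \<Rightarrow> (nat \<Rightarrow> complex mat) \<Rightarrow> nat \<Rightarrow> real" where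
  "power M L K J W V l = (\<Sum>k=1..K. rtr (W k) (selA M L l)) + (\<Sum>j=1..J. rtr (V j) (selA M L l))"

text \<open>Optimal value of (P4) (supremum; -\<infinity> if infeasible).\<close>
definition gamma_max :: "nat \<Rightarrow> nat \<Rightarrow> nat \<Rightarrow> nat \<Rightarrow> (nat \<Rightarrow> complex vec) \<Rightarrow> (nat \<Rightarrow> complex vec)
   \<Rightarrow> real \<Rightarrow> real \<Rightarrow> real \<Rightarrow> (nat \<Rightarrow> real) \<Rightarrow> (nat \<Rightarrow> real) \<Rightarrow> (nat \<Rightarrow> nat \<Rightarrow> real)
   \<Rightarrow> (nat \<Rightarrow> real) \<Rightarrow> ereal" where
  "gamma_max M L K J h g sigma2 eta Qmin C E beta Rhat =
     Sup {ereal (Min ((sinr K J h sigma2 W V) ` {1..K})) | W V.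
            F0 M L K J g eta Qmin C beta Rhat W V \<and>
            (\<forall>l\<in>{1..L}. power M L K J W V l \<le> E l)}"

text \<open>Optimal value h(gamma) of (P5) (infimum; +\<infinity> if infeasible).\<close>
definition hP5 :: "nat \<Rightarrow> nat \<Rightarrow> nat \<Rightarrow> nat \<Rightarrow> (nat \<Rightarrow> complex vec) \<Rightarrow> (nat \<Rightarrow> complex vec)
   \<Rightarrow> real \<Rightarrow> real \<Rightarrow> real \<Rightarrow> (nat \<Rightarrow> real) \<Rightarrow> (nat \<Rightarrow> real) \<Rightarrow> (nat \<Rightarrow> nat \<Rightarrow> real)
   \<Rightarrow> (nat \<Rightarrow> real) \<Rightarrow> real \<Rightarrow> ereal" where
  "hP5 M L K J h g sigma2 eta Qmin C E beta Rhat \<gamma> =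
     Inf {ereal (Max ((\<lambda>l. power M L K J W V l / E l) ` {1..L})) | W V.
            F0 M L K J g eta Qmin C beta Rhat W V \<and>
            (\<forall>k\<in>{1..K}. (1 / \<gamma>) * rtr (outer (h k)) (W k)
                 - (\<Sum>i\<in>{1..K}-{k}. rtr (outer (h k)) (W i))
                 - (\<Sum>i=1..J. rtr (outer (h k)) (V i)) - sigma2 \<ge> 0)}"

end

theory Submission
  imports Defs
begin

text \<open>Both sides of the equivalence say that some point of \<open>F\<^sub>0\<close> meets every power budget
  \<open>E\<^sub>l\<close> while giving all data receivers SINR at least \<open>\<gamma>\<close>. Since \<open>\<gamma>\<^sub>m\<^sub>a\<^sub>x\<close> and
  \<open>h(\<gamma>)\<close> are a supremum and an infimum, the definitions only provide approximating sequences of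
  beamforming covariances. Along such a sequence the transmit powers bound the diagonals of the
  positive semidefinite covariances, hence all their entries, so a subsequence converges entrywise.
  Every constraint is closed and every SINR is continuous, its denominator being at least
  \<open>\<sigma>\<^sup>2 > 0\<close>; therefore the limit is such a point, and conversely any such point witnesses both
  \<open>\<gamma> \<le> \<gamma>\<^sub>m\<^sub>a\<^sub>x\<close> and \<open>h(\<gamma>) \<le> 1\<close>.\<close>

lemma Bseq_complex_convergent_subseq:
  fixes X :: "nat \<Rightarrow> complex"
  assumes "Bseq X"
  obtains r where "strict_mono r" "convergent (X \<circ> r)"
proof -
  have Bseq_Re_Im: "Bseq (\<lambda>n. Re (Y n))" "Bseq (\<lambda>n. Im (Y n))" if "Bseq Y" for Y :: "nat \<Rightarrow> complex"
  proof -
    from that obtain B where "\<And>n. norm (Y n) \<le> B" by (auto simp: Bseq_def)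
    then show "Bseq (\<lambda>n. Re (Y n))" "Bseq (\<lambda>n. Im (Y n))"
      by (metis BseqI' abs_Re_le_cmod order_trans real_norm_def,
          metis BseqI' abs_Im_le_cmod order_trans real_norm_def)
  qed
  obtain r1 where r1: "strict_mono r1" "monoseq (\<lambda>n. Re (X (r1 n)))"
    using seq_monosub[of "\<lambda>n. Re (X n)"] by blast
  obtain r2 where r2: "strict_mono r2" "monoseq (\<lambda>n. Im (X (r1 (r2 n))))"
    using seq_monosub[of "\<lambda>n. Im (X (r1 n))"] by blast
  have "convergent (\<lambda>n. Re (X (r1 n)))"
    using Bseq_monoseq_convergent[OF Bseq_Re_Im(1)[OF Bseq_subseq[OF assms, of r1]] r1(2)] .
  from convergent_subseq_convergent[OF this r2(1)] have "convergent (\<lambda>n. Re (X (r1 (r2 n))))"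
    by (simp add: o_def)
  moreover have "convergent (\<lambda>n. Im (X (r1 (r2 n))))"
    using Bseq_monoseq_convergent[OF Bseq_Re_Im(2)[OF Bseq_subseq[OF assms, of "r1 \<circ> r2"]]] r2(2)
    unfolding o_def .
  ultimately obtain a b where "(\<lambda>n. Re (X (r1 (r2 n)))) \<longlonglongrightarrow> a" "(\<lambda>n. Im (X (r1 (r2 n)))) \<longlonglongrightarrow> b"
    unfolding convergent_def by blast
  from tendsto_Complex[OF this] have "convergent (X \<circ> (r1 \<circ> r2))"
    unfolding convergent_def o_def complex.collapse by blast
  with strict_mono_o[OF r1(1) r2(1)] show ?thesis by (rule that)
qed

lemma finite_family_convergent_subseq:
  fixes X :: "'i \<Rightarrow> nat \<Rightarrow> complex"
  assumes "finite I" "\<And>i. i \<in> I \<Longrightarrow> Bseq (X i)"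
  shows "\<exists>r. strict_mono r \<and> (\<forall>i\<in>I. convergent (X i \<circ> r))"
  using assms
proof (induction I rule: finite_induct)
  case empty
  have "strict_mono id" by (simp add: strict_mono_def)
  then show ?case by blast
next
  case (insert a I)
  then obtain r where r: "strict_mono r" "\<forall>i\<in>I. convergent (X i \<circ> r)"
    by blast
  have "Bseq (X a \<circ> r)"
    using Bseq_subseq[OF insert.prems[OF insertI1], of r] by (simp add: o_def)
  then obtain s where s: "strict_mono s" "convergent (X a \<circ> r \<circ> s)"
    by (rule Bseq_complex_convergent_subseq)
  have "convergent (X i \<circ> (r \<circ> s))" if "i \<in> insert a I" for i
  proof (cases "i = a")
    case False
    with that r(2) have "convergent (X i \<circ> r)" by blast
    from convergent_subseq_convergent[OF this s(1)] show ?thesis by (simp add: o_assoc)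
  qed (use s(2) in \<open>simp add: o_assoc\<close>)
  then show ?case using strict_mono_o[OF r(1) s(1)] by blast
qed

lemma sum_lessThan_two_points:
  fixes f :: "nat \<Rightarrow> 'a::comm_monoid_add"
  assumes "i < N" "j < N" "i \<noteq> j" "\<And>a. a < N \<Longrightarrow> a \<noteq> i \<Longrightarrow> a \<noteq> j \<Longrightarrow> f a = 0"
  shows "(\<Sum>a<N. f a) = f i + f j"
proof -
  have "(\<Sum>a<N. f a) = (\<Sum>a\<in>{i,j}. f a)"
    by (rule sum.mono_neutral_right) (use assms in auto)
  then show ?thesis using assms(3) by simp
qed

lemma psd_mat_carrier: "psd_mat N W \<Longrightarrow> W \<in> carrier_mat N N"
  by (simp add: psd_mat_def hermitian_mat_def)

lemma psd_mat_diag_nonneg: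
  assumes "psd_mat N W" "i < N"
  shows "0 \<le> Re (W $$ (i,i))"
proof -
  have "0 \<le> Re (\<Sum>a<N. \<Sum>b<N. cnj (unit_vec N i $ a) * W $$ (a,b) * unit_vec N i $ b)"
    using assms(1) unit_vec_carrier unfolding psd_mat_def by blast
  also have "(\<Sum>a<N. \<Sum>b<N. cnj (unit_vec N i $ a) * W $$ (a,b) * unit_vec N i $ b)
      = (\<Sum>a<N. \<Sum>b<N. if a = i then if b = i then W $$ (a,b) else 0 else 0)"
    using assms(2) by (intro sum.cong refl) (auto simp: index_unit_vec)
  also have "\<dots> = (\<Sum>a<N. if a = i then W $$ (i,i) else 0)"
    by (intro sum.cong refl) auto
  also have "\<dots> = W $$ (i,i)"
    using assms(2) by simp
  finally show ?thesis .
qed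

lemma psd_mat_entry_bound:
  assumes psd: "psd_mat N W" and ij: "i < N" "j < N"
  shows "cmod (W $$ (i,j)) \<le> (Re (W $$ (i,i)) + Re (W $$ (j,j))) / 2"
proof (cases "i = j")
  case True
  have "W $$ (i,i) = cnj (W $$ (i,i))"
    using psd ij unfolding psd_mat_def hermitian_mat_def by blast
  then have "Im (W $$ (i,i)) = 0"
    by (simp add: complex_eq_iff)
  then show ?thesis
    using True psd_mat_diag_nonneg[OF psd ij(1)] by (simp add: cmod_eq_Re)
next
  case False
  define w where "w = W $$ (i,j)"
  have w_cnj: "W $$ (j,i) = cnj w"
    using psd ij unfolding psd_mat_def hermitian_mat_def w_def by blast
  show ?thesis
  proof (cases "w = 0")
    case True
    then show ?thesis
      using psd_mat_diag_nonneg[OF psd ij(1)] psd_mat_diag_nonneg[OF psd ij(2)] by (simp add: w_def)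
  next
    case w_nonzero: False
    \<comment> \<open>at this \<open>x\<close> the form equals \<open>W\<^sub>i\<^sub>i + W\<^sub>j\<^sub>j - 2 |W\<^sub>i\<^sub>j|\<close>\<close>
    define c where "c = - cnj w / of_real (cmod w)"
    define x where "x = vec N (\<lambda>a. if a = i then 1 else if a = j then c else 0)"
    have "0 \<le> Re (\<Sum>a<N. \<Sum>b<N. cnj (x $ a) * W $$ (a,b) * x $ b)"
      using psd vec_carrier[of N] unfolding psd_mat_def x_def by blast
    also have "(\<Sum>a<N. \<Sum>b<N. cnj (x $ a) * W $$ (a,b) * x $ b)
        = W $$ (i,i) + W $$ (i,j) * c + cnj c * W $$ (j,i) + cnj c * W $$ (j,j) * c"
      using ij False by (simp add: sum_lessThan_two_points[OF ij False] x_def algebra_simps)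
    also have "\<dots> = W $$ (i,i) + W $$ (j,j) * (cnj c * c) + w * c + cnj (w * c)"
      by (simp add: w_cnj w_def algebra_simps)
    also have "w * c = - of_real (cmod w)"
      using w_nonzero by (simp add: c_def complex_norm_square[symmetric] power2_eq_square field_simps)
    also have "cnj c * c = 1"
      using w_nonzero by (simp add: c_def complex_norm_square[symmetric] power2_eq_square field_simps)
    finally show ?thesis by (simp add: w_def)
  qed
qed

lemma rtr_eq_sum:
  assumes "X \<in> carrier_mat N N" "Y \<in> carrier_mat N N"
  shows "rtr X Y = Re (\<Sum>i<N. \<Sum>j<N. X $$ (i,j) * Y $$ (j,i))"
  using assms unfolding rtr_def mtrace_def
  by (auto simp: scalar_prod_def atLeast0LessThan intro!: arg_cong[where f = Re] sum.cong)

lemma outer_carrier: "h \<in> carrier_vec N \<Longrightarrow> outer h \<in> carrier_mat N N"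
  by (simp add: outer_def)

lemma rtr_outer:
  assumes "h \<in> carrier_vec N" "W \<in> carrier_mat N N"
  shows "rtr (outer h) W = Re (\<Sum>a<N. \<Sum>b<N. cnj (h $ a) * W $$ (a,b) * h $ b)"
proof -
  have "rtr (outer h) W = Re (\<Sum>i<N. \<Sum>j<N. h $ i * cnj (h $ j) * W $$ (j,i))"
    using rtr_eq_sum[OF outer_carrier[OF assms(1)] assms(2)] assms(1) by (simp add: outer_def)
  also have "\<dots> = Re (\<Sum>j<N. \<Sum>i<N. h $ i * cnj (h $ j) * W $$ (j,i))"
    by (subst sum.swap) (rule refl)
  finally show ?thesis by (simp add: algebra_simps)
qed

lemma rtr_outer_nonneg:
  assumes "h \<in> carrier_vec N" "psd_mat N W"
  shows "0 \<le> rtr (outer h) W"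
  using assms rtr_outer[OF assms(1) psd_mat_carrier[OF assms(2)]] unfolding psd_mat_def by auto

lemma rtr_selA:
  assumes "W \<in> carrier_mat (M*L) (M*L)"
  shows "rtr W (selA M L l) = (\<Sum>i<M*L. if (l-1)*M \<le> i \<and> i < l*M then Re (W $$ (i,i)) else 0)"
proof -
  have "rtr W (selA M L l) = Re (\<Sum>i<M*L. \<Sum>j<M*L. W $$ (i,j) * selA M L l $$ (j,i))"
    using rtr_eq_sum[OF assms, of "selA M L l"] by (simp add: selA_def mat_diag_dim)
  also have "\<dots> = Re (\<Sum>i<M*L. W $$ (i,i) * (if (l-1)*M \<le> i \<and> i < l*M then 1 else 0))"
    by (intro arg_cong[where f=Re] sum.cong refl) (simp add: selA_def mat_diag_def if_distrib cong: if_cong)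
  finally show ?thesis
    by (simp add: Re_sum if_distrib cong: if_cong)
qed

lemma rtr_selA_nonneg:
  assumes "psd_mat (M*L) W"
  shows "0 \<le> rtr W (selA M L l)"
  using psd_mat_diag_nonneg[OF assms]
  by (auto simp: rtr_selA[OF psd_mat_carrier[OF assms]] intro!: sum_nonneg)

lemma diag_le_rtr_selA:
  assumes "psd_mat (M*L) W" "i < M*L"
  shows "Re (W $$ (i,i)) \<le> rtr W (selA M L (i div M + 1))"
proof -
  have "M > 0" using assms(2) by (cases M) auto
  then have block: "(i div M) * M \<le> i \<and> i < (i div M + 1) * M"
    by (metis add.commute div_times_less_eq_dividend mod_less_divisor div_mult_mod_eq
        add_less_cancel_left distrib_right mult_1)
  let ?l = "i div M + 1"
  have "(if (?l-1)*M \<le> i \<and> i < ?l*M then Re (W $$ (i,i)) else 0)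
      \<le> (\<Sum>i<M*L. if (?l-1)*M \<le> i \<and> i < ?l*M then Re (W $$ (i,i)) else 0)"
    by (rule member_le_sum) (use assms psd_mat_diag_nonneg[OF assms(1)] in auto)
  then show ?thesis
    using block by (simp add: rtr_selA[OF psd_mat_carrier[OF assms(1)]])
qed

definition entrywise_LIMSEQ :: "nat \<Rightarrow> (nat \<Rightarrow> complex mat) \<Rightarrow> complex mat \<Rightarrow> bool" where
  "entrywise_LIMSEQ N A B \<longleftrightarrow>
     B \<in> carrier_mat N N \<and> (\<forall>i<N. \<forall>j<N. (\<lambda>n. A n $$ (i,j)) \<longlonglongrightarrow> B $$ (i,j))"

lemma tendsto_rtr_left:
  assumes "\<And>n. A n \<in> carrier_mat N N" "entrywise_LIMSEQ N A B" "X \<in> carrier_mat N N"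
  shows "(\<lambda>n. rtr X (A n)) \<longlonglongrightarrow> rtr X B"
proof -
  have B: "B \<in> carrier_mat N N" using assms(2) by (simp add: entrywise_LIMSEQ_def)
  show ?thesis
    unfolding rtr_eq_sum[OF assms(3) assms(1)] rtr_eq_sum[OF assms(3) B]
    by (intro tendsto_Re tendsto_sum tendsto_mult_left) (use assms(2) in \<open>auto simp: entrywise_LIMSEQ_def\<close>)
qed

lemma tendsto_rtr_right:
  assumes "\<And>n. A n \<in> carrier_mat N N" "entrywise_LIMSEQ N A B" "X \<in> carrier_mat N N"
  shows "(\<lambda>n. rtr (A n) X) \<longlonglongrightarrow> rtr B X"
proof -
  have B: "B \<in> carrier_mat N N" using assms(2) by (simp add: entrywise_LIMSEQ_def)
  show ?thesis
    unfolding rtr_eq_sum[OF assms(1) assms(3)] rtr_eq_sum[OF B assms(3)]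
    by (intro tendsto_Re tendsto_sum tendsto_mult_right) (use assms(2) in \<open>auto simp: entrywise_LIMSEQ_def\<close>)
qed

lemma psd_mat_entrywise_LIMSEQ:
  assumes psd: "\<And>n. psd_mat N (A n)" and lim: "entrywise_LIMSEQ N A B"
  shows "psd_mat N B"
proof -
  have entry: "(\<lambda>n. A n $$ (i,j)) \<longlonglongrightarrow> B $$ (i,j)" if "i < N" "j < N" for i j
    using lim that unfolding entrywise_LIMSEQ_def by blast
  have "B $$ (i,j) = cnj (B $$ (j,i))" if "i < N" "j < N" for i j
  proof (rule LIMSEQ_unique[OF entry[OF that]])
    have "A n $$ (i,j) = cnj (A n $$ (j,i))" for n
      using psd that unfolding psd_mat_def hermitian_mat_def by blast
    then show "(\<lambda>n. A n $$ (i,j)) \<longlonglongrightarrow> cnj (B $$ (j,i))"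
      using tendsto_cnj[OF entry[OF that(2,1)]] by simp
  qed
  moreover have "0 \<le> Re (\<Sum>i<N. \<Sum>j<N. cnj (x $ i) * B $$ (i,j) * x $ j)" if "x \<in> carrier_vec N" for x
  proof (rule LIMSEQ_le_const)
    show "(\<lambda>n. Re (\<Sum>i<N. \<Sum>j<N. cnj (x $ i) * A n $$ (i,j) * x $ j))
        \<longlonglongrightarrow> Re (\<Sum>i<N. \<Sum>j<N. cnj (x $ i) * B $$ (i,j) * x $ j)"
      by (intro tendsto_Re tendsto_sum tendsto_mult_left tendsto_mult_right) (simp add: entry)
    show "\<exists>N'. \<forall>n\<ge>N'. 0 \<le> Re (\<Sum>i<N. \<Sum>j<N. cnj (x $ i) * A n $$ (i,j) * x $ j)"
      using psd that unfolding psd_mat_def by blast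
  qed
  ultimately show ?thesis
    using lim unfolding psd_mat_def hermitian_mat_def entrywise_LIMSEQ_def by blast
qed

lemma psd_family_entrywise_convergent_subseq:
  fixes A :: "nat \<Rightarrow> 'k \<Rightarrow> complex mat"
  assumes "finite S"
    and psd: "\<And>n k. k \<in> S \<Longrightarrow> psd_mat N (A n k)"
    and diag_bound: "\<And>n k i. k \<in> S \<Longrightarrow> i < N \<Longrightarrow> Re (A n k $$ (i,i)) \<le> B i"
  obtains r Al where "strict_mono r" "\<And>k. k \<in> S \<Longrightarrow> entrywise_LIMSEQ N (\<lambda>n. A (r n) k) (Al k)"
proof -
  define X where "X = (\<lambda>(k,i,j) n. A n k $$ (i,j))"
  have "Bseq (X (k,i,j))" if "(k,i,j) \<in> S \<times> {..<N} \<times> {..<N}" for k i j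
  proof (rule BseqI')
    fix n
    have kij: "k \<in> S" "i < N" "j < N" using that by auto
    have "cmod (A n k $$ (i,j)) \<le> (B i + B j) / 2"
      using psd_mat_entry_bound[OF psd[OF kij(1)] kij(2,3), of n]
        diag_bound[OF kij(1,2), of n] diag_bound[OF kij(1,3), of n]
      by (simp add: field_simps)
    then show "norm (X (k,i,j) n) \<le> (B i + B j) / 2" by (simp add: X_def)
  qed
  then obtain r where r: "strict_mono r"
    and conv: "\<And>k i j. k \<in> S \<Longrightarrow> i < N \<Longrightarrow> j < N \<Longrightarrow> convergent (\<lambda>n. A (r n) k $$ (i,j))"
    using finite_family_convergent_subseq[of "S \<times> {..<N} \<times> {..<N}" X] assms(1)
    by (fastforce simp: X_def o_def)
  define Al where "Al k = mat N N (\<lambda>(i,j). lim (\<lambda>n. A (r n) k $$ (i,j)))" for k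
  have "entrywise_LIMSEQ N (\<lambda>n. A (r n) k) (Al k)" if "k \<in> S" for k
    using conv[OF that] unfolding entrywise_LIMSEQ_def Al_def by (simp add: convergent_LIMSEQ_iff)
  with r that show ?thesis by blast
qed

lemma LIMSEQ_inverse_Suc_subseq:
  assumes "strict_mono r"
  shows "(\<lambda>n. inverse (real (Suc (r n)))) \<longlonglongrightarrow> 0"
  using LIMSEQ_subseq_LIMSEQ[OF LIMSEQ_inverse_real_of_nat assms] by (simp add: o_def)

lemma le_Sup_approx_seq:
  fixes f :: "'a \<Rightarrow> 'b \<Rightarrow> real"
  assumes "ereal c \<le> Sup {ereal (f x y) | x y. P x y}"
  obtains xs ys where "\<And>n. P (xs n) (ys n)" "\<And>n. c - inverse (Suc n) < f (xs n) (ys n)"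
proof -
  have "\<exists>x y. P x y \<and> c - inverse (Suc n) < f x y" for n
  proof -
    have "ereal (c - inverse (Suc n)) < ereal c" by simp
    also note assms
    finally show ?thesis by (fastforce simp: less_Sup_iff)
  qed
  then show ?thesis using that by metis
qed

lemma Inf_le_approx_seq:
  fixes f :: "'a \<Rightarrow> 'b \<Rightarrow> real"
  assumes "Inf {ereal (f x y) | x y. P x y} \<le> ereal c"
  obtains xs ys where "\<And>n. P (xs n) (ys n)" "\<And>n. f (xs n) (ys n) < c + inverse (Suc n)"
proof -
  have "\<exists>x y. P x y \<and> f x y < c + inverse (Suc n)" for n
  proof -
    note assms
    also have "ereal c < ereal (c + inverse (Suc n))" by simp
    finally show ?thesis by (fastforce simp: Inf_less_iff)
  qed
  then show ?thesis using that by metis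
qed

locale downlink_system =
  fixes M L K J :: nat
    and h g :: "nat \<Rightarrow> complex vec"
    and sigma2 eta Qmin :: real
    and C E Rhat :: "nat \<Rightarrow> real"
    and beta :: "nat \<Rightarrow> nat \<Rightarrow> real"
  assumes K_pos: "K \<ge> 1" and L_pos: "L \<ge> 1"
    and h_carrier: "\<And>k. k \<in> {1..K} \<Longrightarrow> h k \<in> carrier_vec (M * L)"
    and g_carrier: "\<And>j. j \<in> {1..J} \<Longrightarrow> g j \<in> carrier_vec (M * L)"
    and sigma2_pos: "sigma2 > 0"
    and E_pos: "\<And>l. l \<in> {1..L} \<Longrightarrow> E l > 0"
begin

abbreviation "feasible \<equiv> F0 M L K J g eta Qmin C beta Rhat"
abbreviation "tx_power \<equiv> power M L K J"
abbreviation "SINR \<equiv> sinr K J h sigma2"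

definition interference_noise :: "(nat \<Rightarrow> complex mat) \<Rightarrow> (nat \<Rightarrow> complex mat) \<Rightarrow> nat \<Rightarrow> real" where
  "interference_noise W V k =
     (\<Sum>i\<in>{1..K}-{k}. rtr (outer (h k)) (W i)) + (\<Sum>i=1..J. rtr (outer (h k)) (V i)) + sigma2"

definition achieves :: "real \<Rightarrow> (nat \<Rightarrow> complex mat) \<Rightarrow> (nat \<Rightarrow> complex mat) \<Rightarrow> bool" where
  "achieves \<gamma> W V \<longleftrightarrow>
     feasible W V \<and> (\<forall>l\<in>{1..L}. tx_power W V l \<le> E l) \<and> (\<forall>k\<in>{1..K}. \<gamma> \<le> SINR W V k)"

definition beamforming_LIMSEQ ::
    "(nat \<Rightarrow> nat \<Rightarrow> complex mat) \<Rightarrow> (nat \<Rightarrow> nat \<Rightarrow> complex mat) \<Rightarrow> (nat \<Rightarrow> complex mat) \<Rightarrow> (nat \<Rightarrow> complex mat) \<Rightarrow> bool" where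
  "beamforming_LIMSEQ Ws Vs W V \<longleftrightarrow>
     (\<forall>k\<in>{1..K}. entrywise_LIMSEQ (M*L) (\<lambda>n. Ws n k) (W k)) \<and>
     (\<forall>j\<in>{1..J}. entrywise_LIMSEQ (M*L) (\<lambda>n. Vs n j) (V j))"

lemma feasible_psd:
  assumes "feasible W V"
  shows "\<And>k. k \<in> {1..K} \<Longrightarrow> psd_mat (M*L) (W k)" "\<And>j. j \<in> {1..J} \<Longrightarrow> psd_mat (M*L) (V j)"
  using assms unfolding F0_def by blast+

lemma interference_noise_ge_sigma2:
  assumes "feasible W V" "k \<in> {1..K}"
  shows "sigma2 \<le> interference_noise W V k"
proof -
  note nonneg = rtr_outer_nonneg[OF h_carrier[OF assms(2)]]
  have "0 \<le> (\<Sum>i\<in>{1..K}-{k}. rtr (outer (h k)) (W i))"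
    using nonneg feasible_psd(1)[OF assms(1)] by (auto intro: sum_nonneg)
  moreover have "0 \<le> (\<Sum>i=1..J. rtr (outer (h k)) (V i))"
    using nonneg feasible_psd(2)[OF assms(1)] by (auto intro: sum_nonneg)
  ultimately show ?thesis
    unfolding interference_noise_def by linarith
qed

lemma sinr_eq: "SINR W V k = rtr (outer (h k)) (W k) / interference_noise W V k"
  by (simp add: sinr_def interference_noise_def)

lemma sinr_constraint_iff:
  assumes "\<gamma> > 0" "feasible W V" "k \<in> {1..K}"
  shows "(1 / \<gamma>) * rtr (outer (h k)) (W k) - (\<Sum>i\<in>{1..K}-{k}. rtr (outer (h k)) (W i))
           - (\<Sum>i=1..J. rtr (outer (h k)) (V i)) - sigma2 \<ge> 0
         \<longleftrightarrow> \<gamma> \<le> SINR W V k"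
proof -
  have "interference_noise W V k > 0"
    using interference_noise_ge_sigma2[OF assms(2,3)] sigma2_pos by linarith
  with assms(1) show ?thesis
    by (simp add: sinr_eq le_divide_eq interference_noise_def field_simps)
qed

lemma block_index_range:
  assumes "i < M*L"
  shows "i div M + 1 \<in> {1..L}"
  using assms less_mult_imp_div_less[of i L M] by (simp add: mult.commute)

lemma rtr_selA_le_tx_power:
  assumes "feasible W V"
  shows "k \<in> {1..K} \<Longrightarrow> rtr (W k) (selA M L l) \<le> tx_power W V l"
    and "j \<in> {1..J} \<Longrightarrow> rtr (V j) (selA M L l) \<le> tx_power W V l"
proof -
  have W_nonneg: "0 \<le> (\<Sum>k=1..K. rtr (W k) (selA M L l))"
    and V_nonneg: "0 \<le> (\<Sum>j=1..J. rtr (V j) (selA M L l))"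
    using rtr_selA_nonneg feasible_psd[OF assms] by (auto intro: sum_nonneg)
  show "rtr (W k) (selA M L l) \<le> tx_power W V l" if "k \<in> {1..K}"
    using member_le_sum[of k "{1..K}" "\<lambda>k. rtr (W k) (selA M L l)"] that V_nonneg
      rtr_selA_nonneg feasible_psd(1)[OF assms]
    by (simp add: power_def)
  show "rtr (V j) (selA M L l) \<le> tx_power W V l" if "j \<in> {1..J}"
    using member_le_sum[of j "{1..J}" "\<lambda>j. rtr (V j) (selA M L l)"] that W_nonneg
      rtr_selA_nonneg feasible_psd(2)[OF assms]
    by (simp add: power_def)
qed


lemma bounded_feasible_convergent_subseq:
  fixes Ws Vs :: "nat \<Rightarrow> nat \<Rightarrow> complex mat"
  assumes feasible: "\<And>n. feasible (Ws n) (Vs n)"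
    and bounded: "\<And>n l. l \<in> {1..L} \<Longrightarrow> tx_power (Ws n) (Vs n) l \<le> P l"
  obtains r W V where "strict_mono r" "beamforming_LIMSEQ (\<lambda>n. Ws (r n)) (\<lambda>n. Vs (r n)) W V"
proof -
  \<comment> \<open>treat the data and energy beams as one finite family, so that a single subsequence serves both\<close>
  define U where "U n = case_sum (Ws n) (Vs n)" for n :: nat
  define S where "S = Inl ` {1..K} \<union> Inr ` {1..J}"
  have psd: "psd_mat (M*L) (U n u)" if "u \<in> S" for n u
    using that feasible_psd[OF feasible] by (auto simp: U_def S_def)
  have diag: "Re (U n u $$ (i,i)) \<le> P (i div M + 1)" if "u \<in> S" "i < M*L" for n u i
  proof -
    have "Re (U n u $$ (i,i)) \<le> tx_power (Ws n) (Vs n) (i div M + 1)"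
    proof (cases u)
      case (Inl k)
      then have k: "k \<in> {1..K}" using that(1) by (auto simp: S_def)
      have "Re (Ws n k $$ (i,i)) \<le> rtr (Ws n k) (selA M L (i div M + 1))"
        by (rule diag_le_rtr_selA[OF feasible_psd(1)[OF feasible k] that(2)])
      also have "\<dots> \<le> tx_power (Ws n) (Vs n) (i div M + 1)"
        by (rule rtr_selA_le_tx_power(1)[OF feasible k])
      finally show ?thesis by (simp add: U_def Inl)
    next
      case (Inr j)
      then have j: "j \<in> {1..J}" using that(1) by (auto simp: S_def)
      have "Re (Vs n j $$ (i,i)) \<le> rtr (Vs n j) (selA M L (i div M + 1))"
        by (rule diag_le_rtr_selA[OF feasible_psd(2)[OF feasible j] that(2)])
      also have "\<dots> \<le> tx_power (Ws n) (Vs n) (i div M + 1)"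
        by (rule rtr_selA_le_tx_power(2)[OF feasible j])
      finally show ?thesis by (simp add: U_def Inr)
    qed
    also have "\<dots> \<le> P (i div M + 1)"
      using bounded block_index_range[OF that(2)] by blast
    finally show ?thesis .
  qed
  have "finite S" by (simp add: S_def)
  obtain r Ul where r: "strict_mono r"
    and lim: "\<And>u. u \<in> S \<Longrightarrow> entrywise_LIMSEQ (M*L) (\<lambda>n. U (r n) u) (Ul u)"
    using psd_family_entrywise_convergent_subseq[of S "M*L" U "\<lambda>i. P (i div M + 1)", OF \<open>finite S\<close> psd diag]
    by blast
  have "beamforming_LIMSEQ (\<lambda>n. Ws (r n)) (\<lambda>n. Vs (r n)) (Ul \<circ> Inl) (Ul \<circ> Inr)"
    unfolding beamforming_LIMSEQ_def
  proof (intro conjI ballI)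
    show "entrywise_LIMSEQ (M*L) (\<lambda>n. Ws (r n) k) ((Ul \<circ> Inl) k)" if "k \<in> {1..K}" for k
      using lim[of "Inl k"] that by (simp add: U_def S_def)
    show "entrywise_LIMSEQ (M*L) (\<lambda>n. Vs (r n) j) ((Ul \<circ> Inr) j)" if "j \<in> {1..J}" for j
      using lim[of "Inr j"] that by (simp add: U_def S_def)
  qed
  with r show ?thesis by (rule that)
qed

context
  fixes Ws Vs :: "nat \<Rightarrow> nat \<Rightarrow> complex mat" and W V :: "nat \<Rightarrow> complex mat"
  assumes feasible_seq: "\<And>n. feasible (Ws n) (Vs n)"
    and lim: "beamforming_LIMSEQ Ws Vs W V"
begin

lemma tendsto_rtr_beams:
  assumes "X \<in> carrier_mat (M*L) (M*L)"
  shows "k \<in> {1..K} \<Longrightarrow> (\<lambda>n. rtr X (Ws n k)) \<longlonglongrightarrow> rtr X (W k)"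
    and "k \<in> {1..K} \<Longrightarrow> (\<lambda>n. rtr (Ws n k) X) \<longlonglongrightarrow> rtr (W k) X"
    and "j \<in> {1..J} \<Longrightarrow> (\<lambda>n. rtr X (Vs n j)) \<longlonglongrightarrow> rtr X (V j)"
    and "j \<in> {1..J} \<Longrightarrow> (\<lambda>n. rtr (Vs n j) X) \<longlonglongrightarrow> rtr (V j) X"
proof -
  assume k: "k \<in> {1..K}"
  note carrier = psd_mat_carrier[OF feasible_psd(1)[OF feasible_seq k]]
  have lim_k: "entrywise_LIMSEQ (M*L) (\<lambda>n. Ws n k) (W k)"
    using lim k by (simp add: beamforming_LIMSEQ_def)
  show "(\<lambda>n. rtr X (Ws n k)) \<longlonglongrightarrow> rtr X (W k)"
    by (rule tendsto_rtr_left[OF carrier lim_k assms])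
  show "(\<lambda>n. rtr (Ws n k) X) \<longlonglongrightarrow> rtr (W k) X"
    by (rule tendsto_rtr_right[OF carrier lim_k assms])
next
  assume j: "j \<in> {1..J}"
  note carrier = psd_mat_carrier[OF feasible_psd(2)[OF feasible_seq j]]
  have lim_j: "entrywise_LIMSEQ (M*L) (\<lambda>n. Vs n j) (V j)"
    using lim j by (simp add: beamforming_LIMSEQ_def)
  show "(\<lambda>n. rtr X (Vs n j)) \<longlonglongrightarrow> rtr X (V j)"
    by (rule tendsto_rtr_left[OF carrier lim_j assms])
  show "(\<lambda>n. rtr (Vs n j) X) \<longlonglongrightarrow> rtr (V j) X"
    by (rule tendsto_rtr_right[OF carrier lim_j assms])
qed

lemma feasible_limit: "feasible W V"
  unfolding F0_def
proof (intro conjI ballI)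
  fix j assume j: "j \<in> {1..J}"
  show "Qmin / eta \<le> (\<Sum>i=1..K. rtr (outer (g j)) (W i)) + (\<Sum>i=1..J. rtr (outer (g j)) (V i))"
  proof (rule LIMSEQ_le_const)
    show "(\<lambda>n. (\<Sum>i=1..K. rtr (outer (g j)) (Ws n i)) + (\<Sum>i=1..J. rtr (outer (g j)) (Vs n i)))
        \<longlonglongrightarrow> (\<Sum>i=1..K. rtr (outer (g j)) (W i)) + (\<Sum>i=1..J. rtr (outer (g j)) (V i))"
      using tendsto_rtr_beams[OF outer_carrier[OF g_carrier[OF j]]] by (intro tendsto_add tendsto_sum) auto
    show "\<exists>N. \<forall>n\<ge>N. Qmin / eta \<le> (\<Sum>i=1..K. rtr (outer (g j)) (Ws n i)) + (\<Sum>i=1..J. rtr (outer (g j)) (Vs n i))"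
      using feasible_seq j unfolding F0_def by blast
  qed
next
  fix l assume l: "l \<in> {1..L}"
  show "(\<Sum>k=1..K. beta k l * rtr (W k) (selA M L l) * Rhat k) \<le> C l"
  proof (rule LIMSEQ_le_const2)
    show "(\<lambda>n. \<Sum>k=1..K. beta k l * rtr (Ws n k) (selA M L l) * Rhat k)
        \<longlonglongrightarrow> (\<Sum>k=1..K. beta k l * rtr (W k) (selA M L l) * Rhat k)"
      using tendsto_rtr_beams(2)[of "selA M L l"]
      by (intro tendsto_sum tendsto_mult_right tendsto_mult_left) (auto simp: selA_def mat_diag_dim)
    show "\<exists>N. \<forall>n\<ge>N. (\<Sum>k=1..K. beta k l * rtr (Ws n k) (selA M L l) * Rhat k) \<le> C l"
      using feasible_seq l unfolding F0_def by blast
  qed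
next
  show "psd_mat (M*L) (W k)" if "k \<in> {1..K}" for k
  proof (rule psd_mat_entrywise_LIMSEQ)
    show "psd_mat (M*L) (Ws n k)" for n
      using feasible_psd(1)[OF feasible_seq that] .
    show "entrywise_LIMSEQ (M*L) (\<lambda>n. Ws n k) (W k)"
      using lim that by (simp add: beamforming_LIMSEQ_def)
  qed
  show "psd_mat (M*L) (V j)" if "j \<in> {1..J}" for j
  proof (rule psd_mat_entrywise_LIMSEQ)
    show "psd_mat (M*L) (Vs n j)" for n
      using feasible_psd(2)[OF feasible_seq that] .
    show "entrywise_LIMSEQ (M*L) (\<lambda>n. Vs n j) (V j)"
      using lim that by (simp add: beamforming_LIMSEQ_def)
  qed
qed

lemma tendsto_tx_power: "(\<lambda>n. tx_power (Ws n) (Vs n) l) \<longlonglongrightarrow> tx_power W V l"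
  unfolding power_def
  using tendsto_rtr_beams(2,4)[of "selA M L l"]
  by (intro tendsto_add tendsto_sum) (auto simp: selA_def mat_diag_dim)

lemma tendsto_sinr:
  assumes k: "k \<in> {1..K}"
  shows "(\<lambda>n. SINR (Ws n) (Vs n) k) \<longlonglongrightarrow> SINR W V k"
proof -
  note tendsto_outer = tendsto_rtr_beams[OF outer_carrier[OF h_carrier[OF k]]]
  have "(\<lambda>n. interference_noise (Ws n) (Vs n) k) \<longlonglongrightarrow> interference_noise W V k"
    unfolding interference_noise_def using tendsto_outer
    by (intro tendsto_add tendsto_sum tendsto_const) auto
  moreover have "interference_noise W V k \<noteq> 0"
    using interference_noise_ge_sigma2[OF feasible_limit k] sigma2_pos by linarith
  ultimately show ?thesis
    unfolding sinr_eq using tendsto_outer(1)[OF k] by (intro tendsto_divide)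
qed

end

lemma achieves_of_le_gamma_max:
  assumes "ereal \<gamma> \<le> gamma_max M L K J h g sigma2 eta Qmin C E beta Rhat"
  shows "\<exists>W V. achieves \<gamma> W V"
proof -
  obtain Ws Vs where admissible: "\<And>n. feasible (Ws n) (Vs n) \<and> (\<forall>l\<in>{1..L}. tx_power (Ws n) (Vs n) l \<le> E l)"
    and close: "\<And>n. \<gamma> - inverse (Suc n) < Min (SINR (Ws n) (Vs n) ` {1..K})"
    using le_Sup_approx_seq[OF assms[unfolded gamma_max_def]] by blast
  obtain r W V where r: "strict_mono r" and lim: "beamforming_LIMSEQ (\<lambda>n. Ws (r n)) (\<lambda>n. Vs (r n)) W V"
    using bounded_feasible_convergent_subseq[of Ws Vs E] admissible by blast
  have feasible_seq: "\<And>n. feasible (Ws (r n)) (Vs (r n))"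
    using admissible by blast
  have "tx_power W V l \<le> E l" if "l \<in> {1..L}" for l
    using LIMSEQ_le_const2[OF tendsto_tx_power[OF feasible_seq lim]] admissible that by blast
  moreover have "\<gamma> \<le> SINR W V k" if k: "k \<in> {1..K}" for k
  proof (rule LIMSEQ_le)
    show "(\<lambda>n. \<gamma> - inverse (Suc (r n))) \<longlonglongrightarrow> \<gamma>"
      using tendsto_diff[OF tendsto_const LIMSEQ_inverse_Suc_subseq[OF r], of \<gamma>] by simp
    show "(\<lambda>n. SINR (Ws (r n)) (Vs (r n)) k) \<longlonglongrightarrow> SINR W V k"
      by (rule tendsto_sinr[OF feasible_seq lim k])
    show "\<exists>N. \<forall>n\<ge>N. \<gamma> - inverse (Suc (r n)) \<le> SINR (Ws (r n)) (Vs (r n)) k"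
    proof (intro exI allI impI)
      fix n
      have "\<forall>k\<in>{1..K}. \<gamma> - inverse (Suc (r n)) < SINR (Ws (r n)) (Vs (r n)) k"
        using close[of "r n"] K_pos by simp
      then show "\<gamma> - inverse (Suc (r n)) \<le> SINR (Ws (r n)) (Vs (r n)) k"
        using k by (blast intro: less_imp_le)
    qed
  qed
  ultimately show ?thesis
    using feasible_limit[OF feasible_seq lim] unfolding achieves_def by blast
qed

lemma le_gamma_max_of_achieves:
  assumes "achieves \<gamma> W V"
  shows "ereal \<gamma> \<le> gamma_max M L K J h g sigma2 eta Qmin C E beta Rhat"
proof -
  have "ereal \<gamma> \<le> ereal (Min (SINR W V ` {1..K}))"
    using assms K_pos by (simp add: achieves_def)
  also have "\<dots> \<le> gamma_max M L K J h g sigma2 eta Qmin C E beta Rhat"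
    unfolding gamma_max_def by (rule Sup_upper) (use assms in \<open>auto simp: achieves_def\<close>)
  finally show ?thesis .
qed

lemma achieves_of_hP5_le_1:
  assumes gamma_pos: "\<gamma> > 0"
    and "hP5 M L K J h g sigma2 eta Qmin C E beta Rhat \<gamma> \<le> 1"
  shows "\<exists>W V. achieves \<gamma> W V"
proof -
  obtain Ws Vs where admissible: "\<And>n. feasible (Ws n) (Vs n) \<and> (\<forall>k\<in>{1..K}.
        (1 / \<gamma>) * rtr (outer (h k)) (Ws n k) - (\<Sum>i\<in>{1..K}-{k}. rtr (outer (h k)) (Ws n i))
        - (\<Sum>i=1..J. rtr (outer (h k)) (Vs n i)) - sigma2 \<ge> 0)"
    and close: "\<And>n. Max ((\<lambda>l. tx_power (Ws n) (Vs n) l / E l) ` {1..L}) < 1 + inverse (Suc n)"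
    using Inf_le_approx_seq[OF assms(2)[unfolded hP5_def one_ereal_def]] by blast
  have feasible_seq: "\<And>n. feasible (Ws n) (Vs n)"
    using admissible by blast
  have sinr_seq: "\<gamma> \<le> SINR (Ws n) (Vs n) k" if "k \<in> {1..K}" for n k
    using admissible sinr_constraint_iff[OF gamma_pos feasible_seq that] that by blast
  have power_seq: "tx_power (Ws n) (Vs n) l \<le> (1 + inverse (Suc n)) * E l" if l: "l \<in> {1..L}" for n l
    using close[of n] L_pos l E_pos[OF l] by (simp add: divide_less_eq less_imp_le)
  have "tx_power (Ws n) (Vs n) l \<le> 2 * E l" if l: "l \<in> {1..L}" for n l
  proof -
    have "(1 + inverse (real (Suc n))) * E l \<le> 2 * E l"
      using E_pos[OF l] by (intro mult_right_mono) (auto simp: inverse_le_1_iff)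
    with power_seq[OF l, of n] show ?thesis by linarith
  qed
  then obtain r W V where r: "strict_mono r" and lim: "beamforming_LIMSEQ (\<lambda>n. Ws (r n)) (\<lambda>n. Vs (r n)) W V"
    using bounded_feasible_convergent_subseq[of Ws Vs "\<lambda>l. 2 * E l"] feasible_seq by blast
  have "tx_power W V l \<le> E l" if "l \<in> {1..L}" for l
  proof -
    have "(\<lambda>n. (1 + inverse (Suc (r n))) * E l) \<longlonglongrightarrow> (1 + 0) * E l"
      by (intro tendsto_mult tendsto_add tendsto_const LIMSEQ_inverse_Suc_subseq[OF r])
    then show ?thesis
      using LIMSEQ_le[OF tendsto_tx_power[OF feasible_seq lim]] power_seq that by simp
  qed
  moreover have "\<gamma> \<le> SINR W V k" if "k \<in> {1..K}" for k
    using LIMSEQ_le_const[OF tendsto_sinr[OF feasible_seq lim that]] sinr_seq that by blast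
  ultimately show ?thesis
    using feasible_limit[OF feasible_seq lim] unfolding achieves_def by blast
qed

lemma hP5_le_1_of_achieves:
  assumes "\<gamma> > 0" "achieves \<gamma> W V"
  shows "hP5 M L K J h g sigma2 eta Qmin C E beta Rhat \<gamma> \<le> 1"
proof -
  have feasible: "feasible W V"
    using assms(2) by (simp add: achieves_def)
  have "\<forall>k\<in>{1..K}. (1 / \<gamma>) * rtr (outer (h k)) (W k) - (\<Sum>i\<in>{1..K}-{k}. rtr (outer (h k)) (W i))
      - (\<Sum>i=1..J. rtr (outer (h k)) (V i)) - sigma2 \<ge> 0"
    using assms(2) sinr_constraint_iff[OF assms(1) feasible] by (simp add: achieves_def)
  with feasible have "hP5 M L K J h g sigma2 eta Qmin C E beta Rhat \<gamma>
      \<le> ereal (Max ((\<lambda>l. tx_power W V l / E l) ` {1..L}))"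
    unfolding hP5_def by (intro Inf_lower CollectI exI[of _ W] exI[of _ V] conjI refl)
  also have "\<dots> \<le> 1"
    using assms(2) L_pos E_pos by (simp add: achieves_def)
  finally show ?thesis .
qed

end

theorem lemma2:
  fixes M L K J :: nat
    and h g :: "nat \<Rightarrow> complex vec"
    and sigma2 eta Qmin \<gamma> :: real
    and C E Rhat :: "nat \<Rightarrow> real"
    and beta :: "nat \<Rightarrow> nat \<Rightarrow> real"
  assumes "M \<ge> 1" "L \<ge> 1" "K \<ge> 1" "J \<ge> 1"
    and "\<forall>k\<in>{1..K}. h k \<in> carrier_vec (M * L)"
    and "\<forall>j\<in>{1..J}. g j \<in> carrier_vec (M * L)"
    and "sigma2 > 0" "0 < eta" "eta < 1" "Qmin \<ge> 0"
    and "\<forall>l\<in>{1..L}. C l > 0" "\<forall>l\<in>{1..L}. E l > 0"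
    and "\<forall>k\<in>{1..K}. \<forall>l\<in>{1..L}. beta k l > 0"
    and "\<forall>k\<in>{1..K}. Rhat k \<ge> 0"
    and "\<gamma> > 0"
  shows "ereal \<gamma> \<le> gamma_max M L K J h g sigma2 eta Qmin C E beta Rhat
         \<longleftrightarrow> hP5 M L K J h g sigma2 eta Qmin C E beta Rhat \<gamma> \<le> 1"
proof -
  interpret downlink_system M L K J h g sigma2 eta Qmin C E Rhat beta
    by unfold_locales (use assms in auto)
  show ?thesis
    using achieves_of_le_gamma_max le_gamma_max_of_achieves
      achieves_of_hP5_le_1[OF \<open>\<gamma> > 0\<close>] hP5_le_1_of_achieves[OF \<open>\<gamma> > 0\<close>]
    by blast
qed

end
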